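(* Let $\omega$ be a non-quasianalytic concave weight function and let $\sigma$ be a heir of $\omega$. Then for each $n\in\mathbb{N}_{>0}$ there exist $m\in\mathbb{N}_{>0}$, $M>0$ and $0<r_0<1/2$ such that for every $0<r<r_0$ there is $g_{n,r}\in C^\infty(\mathbb{R})$ with $0\le g_{n,r}\le1$, $g_{n,r}(x)=0$ for $x\le-r$, $g_{n,r}(x)=1$ for $x\ge r$, and $$\sup_{x\in\mathbb{R},\,j\in\mathbb{N}}\frac{|g^{(j)}_{n,r}(x)|}{W^m_j}\le M\exp\!\left(\tfrac1n\sigma^*(nr)\right).$$
   Context: A weight function is a continuous increasing $\omega:[0,\infty)\to[0,\infty)$ with $\omega(0)=0$, $\omega(t)\to\infty$, $\omega(2t)=O(\omega(t))$, $\omega(t)=O(t)$, $\log t=o(\omega(t))$, and $\varphi(t)=\omega(e^t)$ convex; non-quasianalytic if $\int_0^\infty\frac{\omega(t)}{1+t^2}dt<\infty$. Normalizing $\omega|_{[0,1]}=0$, $\varphi^*(t)=\sup_{s\ge0}(st-\varphi(s))$ and $W^x_k=\exp(\frac1x\varphi^*(xk))$ is the associated weight matrix of $\omega$. A heir of $\omega$ is a weight function $\sigma$ with $\sigma(t)=o(t)$ as $t\to\infty$ and $\int_1^\infty\frac{\omega(tu)}{u^2}du\le C\sigma(t)+C$ for all $t>0$ and some $C>0$. $\sigma^*(t)=\sup_{s\ge0}(\sigma(s)-st)$. *)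

theory Defs
  imports "HOL-Analysis.Analysis" "HOL-Library.Landau_Symbols"
begin

definition weight_function :: "(real \<Rightarrow> real) \<Rightarrow> bool" where
  "weight_function \<omega> \<longleftrightarrow>
     continuous_on {0..} \<omega> \<and> mono_on {0..} \<omega> \<and> (\<forall>t\<ge>0. \<omega> t \<ge> 0) \<and>
     \<omega> 0 = 0 \<and> filterlim \<omega> at_top at_top \<and>
     (\<lambda>t. \<omega> (2 * t)) \<in> O[at_top](\<omega>) \<and>
     \<omega> \<in> O[at_top](\<lambda>t. t) \<and>
     ln \<in> o[at_top](\<omega>) \<and>
     convex_on UNIV (\<lambda>t. \<omega> (exp t))"

definition non_quasianalytic :: "(real \<Rightarrow> real) \<Rightarrow> bool" where
  "non_quasianalytic \<omega> \<longleftrightarrow>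
     (\<integral>\<^sup>+ t\<in>{0..}. ennreal (\<omega> t / (1 + t\<^sup>2)) \<partial>lborel) < \<infinity>"

definition concave_weight :: "(real \<Rightarrow> real) \<Rightarrow> bool" where
  "concave_weight \<omega> \<longleftrightarrow> concave_on {0..} \<omega>"

definition heir :: "(real \<Rightarrow> real) \<Rightarrow> (real \<Rightarrow> real) \<Rightarrow> bool" where
  "heir \<omega> \<sigma> \<longleftrightarrow> weight_function \<sigma> \<and> \<sigma> \<in> o[at_top](\<lambda>t. t) \<and>
     (\<exists>C>0. \<forall>t>0. (\<integral>\<^sup>+ u\<in>{1..}. ennreal (\<omega> (t * u) / u\<^sup>2) \<partial>lborel)
                    \<le> ennreal (C * \<sigma> t + C))"

definition phi_star :: "(real \<Rightarrow> real) \<Rightarrow> real \<Rightarrow> real" where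
  "phi_star \<omega> t = (SUP s\<in>{0..}. s * t - \<omega> (exp s))"

definition weight_matrix :: "(real \<Rightarrow> real) \<Rightarrow> real \<Rightarrow> nat \<Rightarrow> real" where
  "weight_matrix \<omega> x k = exp (phi_star \<omega> (x * real k) / x)"

definition sigma_star :: "(real \<Rightarrow> real) \<Rightarrow> real \<Rightarrow> real" where
  "sigma_star \<sigma> t = (SUP s\<in>{0..}. \<sigma> s - s * t)"

definition smooth_fun :: "(real \<Rightarrow> real) \<Rightarrow> bool" where
  "smooth_fun g \<longleftrightarrow> (\<forall>j x. (deriv ^^ j) g differentiable (at x))"

end

theory Submission
  imports Defs
begin

text \<open>
  Averaging a ramp successively over windows of widths a_0, a_1, ... converges to a smooth
  function H_0 with H_k = avg a_k H_(k+1). Hence H_0' is a difference quotient of H_1, and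
  inductively |H_0^(j)| <= prod_(i<j) 2/a_i, while H_0 rises from 0 to 1 over an interval of
  length b + sum_i a_i.

  We take a_i = 2/tau_i, where tau_i runs through S * 2^N and doubles at step i only if
  omega(2 tau) - omega(tau) <= m (i+1) log 2. Telescoping then gives
  prod_(i<j) tau_i <= exp(omega(S)/m) tau_j^j exp(-omega(tau_j)/m) <= exp(omega(S)/m) W^m_j,
  and a potential argument gives sum_i 1/tau_i <= (2 + 4Q/m)/S for the dyadic sum
  Q = sum_p omega(2^p S)/2^p. The heir condition bounds Q by 4C(sigma(S) + 1), so choosing S
  with sigma(S) = 3nrS and m >= 128Cn makes the transition length at most r and
  Q/m <= 1 + sigma^*(nr)/n.
\<close>

section \<open>Smooth cutoffs by iterated averaging\<close>

definition avg :: "real \<Rightarrow> (real \<Rightarrow> real) \<Rightarrow> real \<Rightarrow> real" where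
  "avg a f x = integral {x - a..x} f / a"

lemma avg_has_real_derivative:
  assumes f: "continuous_on UNIV f" and a: "a > 0"
  shows "(avg a f has_real_derivative (f x - f (x - a)) / a) (at x)"
proof -
  define lo where "lo = x - a - 1"
  define P where "P y = integral {lo..y} f" for y
  have P': "(P has_real_derivative f y) (at y)" if "lo < y" "y < x + 1" for y
  proof -
    have "(P has_real_derivative f y) (at y within {lo..x + 1})"
      unfolding P_def using that
      by (intro integral_has_real_derivative continuous_on_subset[OF f]) auto
    moreover have "at y within {lo..x + 1} = at y"
      using that by (intro at_within_interior) auto
    ultimately show ?thesis by simp
  qed
  have shifted: "((\<lambda>y. P (y - a)) has_real_derivative f (x - a)) (at x)"
  proof -
    have "(P has_real_derivative f (x - a)) (at (x - a))" using P' a by (simp add: lo_def)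
    moreover have "((\<lambda>y. y - a) has_real_derivative 1) (at x)"
      by (auto intro!: derivative_eq_intros)
    ultimately show ?thesis using DERIV_chain2[of P _ "\<lambda>y. y - a" x 1] by simp
  qed
  have "((\<lambda>y. (P y - P (y - a)) / a) has_real_derivative (f x - f (x - a)) / a) (at x)"
    using P' a by (intro DERIV_cdivide DERIV_diff shifted) (auto simp: lo_def)
  then show ?thesis
  proof (rule has_field_derivative_transform_within_open[of _ _ _ "{x - 1/2<..<x + 1/2}"])
    fix y assume y: "y \<in> {x - 1/2<..<x + 1/2}"
    have "integral {lo..y - a} f + integral {y - a..y} f = integral {lo..y} f"
      using y a by (intro Henstock_Kurzweil_Integration.integral_combine integrable_continuous_interval
          continuous_on_subset[OF f]) (auto simp: lo_def)
    then show "(P y - P (y - a)) / a = avg a f y"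
      unfolding P_def avg_def by (simp add: algebra_simps)
  qed auto
qed

lemma continuous_on_avg:
  "continuous_on UNIV f \<Longrightarrow> a > 0 \<Longrightarrow> continuous_on UNIV (avg a f)"
  by (meson avg_has_real_derivative DERIV_continuous continuous_at_imp_continuous_on)

lemma abs_avg_diff_le:
  assumes f: "continuous_on UNIV f" and h: "continuous_on UNIV h" and a: "a > 0"
    and le: "\<And>t. t \<in> {x - a..x} \<Longrightarrow> \<bar>f t - h t\<bar> \<le> e"
  shows "\<bar>avg a f x - avg a h x\<bar> \<le> e"
proof -
  have "avg a f x - avg a h x = integral {x - a..x} (\<lambda>t. f t - h t) / a"
    unfolding avg_def
    by (subst integral_diff) (auto intro!: integrable_continuous_interval
        intro: continuous_on_subset[OF f] continuous_on_subset[OF h] simp: diff_divide_distrib)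
  moreover have "norm (integral {x - a..x} (\<lambda>t. f t - h t)) \<le> e * (x - (x - a))"
    by (rule integral_bound) (use a le in \<open>auto intro!: continuous_intros
        intro: continuous_on_subset[OF f] continuous_on_subset[OF h]\<close>)
  ultimately show ?thesis using a by (simp add: divide_le_eq abs_divide)
qed

lemma avg_const [simp]: "a > 0 \<Longrightarrow> avg a (\<lambda>_. y) x = y"
  by (simp add: avg_def)

lemma abs_avg_minus_self_le:
  assumes f: "continuous_on UNIV f" and a: "a > 0"
    and lipschitz: "\<And>s t. \<bar>f s - f t\<bar> \<le> L * \<bar>s - t\<bar>"
  shows "\<bar>avg a f x - f x\<bar> \<le> a * L"
proof -
  have "L \<ge> 0" using lipschitz[of 1 0] by simp
  have "\<bar>avg a f x - avg a (\<lambda>_. f x) x\<bar> \<le> a * L"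
  proof (rule abs_avg_diff_le[OF f _ a])
    fix t assume "t \<in> {x - a..x}"
    then have "L * \<bar>t - x\<bar> \<le> a * L" using \<open>L \<ge> 0\<close> by (simp add: mult.commute mult_left_mono)
    then show "\<bar>f t - f x\<bar> \<le> a * L" using lipschitz[of t x] by linarith
  qed simp
  then show ?thesis using a by simp
qed

lemma avg_bounds:
  assumes f: "continuous_on UNIV f" and a: "a > 0" and bounds: "\<And>t. lo \<le> f t \<and> f t \<le> hi"
  shows "lo \<le> avg a f x \<and> avg a f x \<le> hi"
proof -
  have "\<bar>avg a f x - avg a (\<lambda>_. (lo + hi) / 2) x\<bar> \<le> (hi - lo) / 2"
  proof (rule abs_avg_diff_le[OF f _ a])
    fix t
    show "\<bar>f t - (lo + hi) / 2\<bar> \<le> (hi - lo) / 2"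
      unfolding abs_le_iff using bounds[of t] by (auto simp: field_simps)
  qed simp
  then show ?thesis using a unfolding avg_const[OF a] abs_le_iff by (auto simp: field_simps)
qed

lemma avg_eq_const:
  assumes a: "a > 0" and f: "\<And>t. t \<in> {x - a..x} \<Longrightarrow> f t = y"
  shows "avg a f x = y"
proof -
  have "integral {x - a..x} f = integral {x - a..x} (\<lambda>_. y)"
    using f by (intro integral_cong) auto
  then show ?thesis using a by (simp add: avg_def)
qed

definition ramp :: "real \<Rightarrow> real \<Rightarrow> real \<Rightarrow> real" where
  "ramp c b x = max 0 (min 1 ((x - c) / b))"

lemma continuous_on_ramp: "continuous_on UNIV (ramp c b)"
  unfolding ramp_def divide_inverse by (intro continuous_intros)

lemma ramp_bounds: "0 \<le> ramp c b x \<and> ramp c b x \<le> 1"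
  unfolding ramp_def by auto

lemma ramp_eq_0: "b > 0 \<Longrightarrow> x \<le> c \<Longrightarrow> ramp c b x = 0"
  unfolding ramp_def by (auto simp: divide_le_0_iff)

lemma ramp_eq_1: "b > 0 \<Longrightarrow> x \<ge> c + b \<Longrightarrow> ramp c b x = 1"
  unfolding ramp_def by (auto simp: le_divide_eq)

lemma ramp_lipschitz: "b > 0 \<Longrightarrow> \<bar>ramp c b s - ramp c b t\<bar> \<le> (1 / b) * \<bar>s - t\<bar>"
proof -
  assume b: "b > 0"
  have "\<bar>max 0 (min 1 u) - max 0 (min 1 v)\<bar> \<le> \<bar>u - v\<bar>" for u v :: real
    by (auto simp: max_def min_def abs_if)
  moreover have "\<bar>(s - c) / b - (t - c) / b\<bar> = (1 / b) * \<bar>s - t\<bar>"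
    using b by (simp add: diff_divide_distrib[symmetric] abs_divide)
  ultimately show ?thesis unfolding ramp_def by metis
qed

locale cutoff_construction =
  fixes a :: "nat \<Rightarrow> real" and b c :: real
  assumes a_pos: "\<And>i. a i > 0" and summable_a: "summable a" and b_pos: "b > 0"
begin

primrec iter_avg :: "nat \<Rightarrow> nat \<Rightarrow> real \<Rightarrow> real" where
  "iter_avg 0 k = ramp c b"
| "iter_avg (Suc d) k = avg (a k) (iter_avg d (Suc k))"

lemma continuous_on_iter_avg: "continuous_on UNIV (iter_avg d k)"
  by (induction d arbitrary: k) (auto intro: continuous_on_avg a_pos continuous_on_ramp)

lemma iter_avg_bounds: "0 \<le> iter_avg d k x \<and> iter_avg d k x \<le> 1"
proof (induction d arbitrary: k x)
  case 0
  then show ?case by (simp add: ramp_bounds)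
next
  case (Suc d)
  show ?case by (simp, intro avg_bounds continuous_on_iter_avg a_pos Suc)
qed

lemma iter_avg_eq_0: "x \<le> c \<Longrightarrow> iter_avg d k x = 0"
  by (induction d arbitrary: k x) (auto simp: ramp_eq_0 b_pos a_pos intro!: avg_eq_const)

lemma iter_avg_eq_1: "x \<ge> c + b + (\<Sum>i<d. a (k + i)) \<Longrightarrow> iter_avg d k x = 1"
proof (induction d arbitrary: k x)
  case 0
  then show ?case by (simp add: ramp_eq_1 b_pos)
next
  case (Suc d)
  have "(\<Sum>i<Suc d. a (k + i)) = a k + (\<Sum>i<d. a (Suc k + i))"
    by (subst sum.lessThan_Suc_shift) simp
  then show ?case
    using Suc by (auto intro!: avg_eq_const a_pos)
qed

lemma abs_iter_avg_step_le: "\<bar>iter_avg (Suc d) k x - iter_avg d k x\<bar> \<le> a (k + d) / b"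
proof (induction d arbitrary: k x)
  case 0
  have "\<bar>avg (a k) (ramp c b) x - ramp c b x\<bar> \<le> a k * (1 / b)"
    by (intro abs_avg_minus_self_le continuous_on_ramp a_pos ramp_lipschitz b_pos)
  then show ?case by simp
next
  case (Suc d)
  have "\<bar>avg (a k) (iter_avg (Suc d) (Suc k)) x - avg (a k) (iter_avg d (Suc k)) x\<bar> \<le> a (Suc k + d) / b"
    using Suc[of "Suc k"]
    by (intro abs_avg_diff_le continuous_on_iter_avg a_pos) (simp del: iter_avg.simps(2))
  then show ?case by simp
qed

text \<open>The limit of iter_avg d k as d tends to infinity, written as a telescoping series.\<close>
definition cutoff :: "nat \<Rightarrow> real \<Rightarrow> real" where
  "cutoff k x = ramp c b x + (\<Sum>i. iter_avg (Suc i) k x - iter_avg i k x)"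

definition tail :: "nat \<Rightarrow> nat \<Rightarrow> real" where
  "tail k d = (\<Sum>i. a (k + (i + d)) / b)"

lemma summable_tail_terms: "summable (\<lambda>i. a (k + (i + d)) / b)"
  using summable_ignore_initial_segment[OF summable_a, of "k + d"]
  by (simp add: ac_simps summable_divide)

lemma tail_tendsto_0: "tail k \<longlonglongrightarrow> 0"
  using suminf_exist_split2[OF summable_tail_terms[of k 0]] by (simp add: tail_def[abs_def] add.assoc)

lemma iter_avg_telescope: "iter_avg d k x = ramp c b x + (\<Sum>i<d. iter_avg (Suc i) k x - iter_avg i k x)"
  by (subst sum_lessThan_telescope) simp

lemma summable_iter_avg_steps: "summable (\<lambda>i. iter_avg (Suc i) k x - iter_avg i k x)"
  by (rule summable_comparison_test[OF _ summable_tail_terms[of k 0]])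
    (use abs_iter_avg_step_le in auto)

lemma abs_cutoff_minus_iter_avg_le: "\<bar>cutoff k x - iter_avg d k x\<bar> \<le> tail k d"
proof -
  have "cutoff k x - iter_avg d k x = (\<Sum>i. iter_avg (Suc (i + d)) k x - iter_avg (i + d) k x)"
    unfolding cutoff_def iter_avg_telescope[of d]
    using suminf_split_initial_segment[OF summable_iter_avg_steps[of k x], of d] by (simp del: iter_avg.simps)
  also have "\<bar>\<dots>\<bar> \<le> tail k d"
    unfolding tail_def real_norm_def[symmetric]
    by (rule norm_suminf_le[OF _ summable_tail_terms]) (use abs_iter_avg_step_le in auto)
  finally show ?thesis .
qed

lemma uniform_limit_iter_avg: "uniform_limit UNIV (\<lambda>d. iter_avg d k) (cutoff k) sequentially"
proof (rule uniform_limitI)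
  fix e :: real assume "e > 0"
  with tail_tendsto_0[of k] have "eventually (\<lambda>d. tail k d < e) sequentially"
    by (rule order_tendstoD)
  then show "\<forall>\<^sub>F d in sequentially. \<forall>x\<in>UNIV. dist (iter_avg d k x) (cutoff k x) < e"
    by eventually_elim (use abs_cutoff_minus_iter_avg_le in
        \<open>auto simp: dist_real_def abs_minus_commute intro: le_less_trans\<close>)
qed

lemma continuous_on_cutoff: "continuous_on UNIV (cutoff k)"
  by (rule uniform_limit_theorem[OF _ uniform_limit_iter_avg])
    (auto intro!: always_eventually continuous_on_iter_avg)

lemma iter_avg_tendsto_cutoff: "(\<lambda>d. iter_avg d k x) \<longlonglongrightarrow> cutoff k x"
  using tendsto_uniform_limitI[OF uniform_limit_iter_avg] by simp

lemma cutoff_eq_avg: "cutoff k x = avg (a k) (cutoff (Suc k)) x"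
proof (rule LIMSEQ_unique[OF LIMSEQ_Suc[OF iter_avg_tendsto_cutoff]])
  have "\<bar>iter_avg (Suc d) k x - avg (a k) (cutoff (Suc k)) x\<bar> \<le> tail (Suc k) d" for d
    using abs_cutoff_minus_iter_avg_le[of "Suc k" _ d]
    by (simp add: abs_avg_diff_le continuous_on_iter_avg continuous_on_cutoff a_pos abs_minus_commute)
  then show "(\<lambda>d. iter_avg (Suc d) k x) \<longlonglongrightarrow> avg (a k) (cutoff (Suc k)) x"
    by (intro Lim_null_comparison[OF _ tail_tendsto_0[of "Suc k"], THEN LIM_zero_cancel] always_eventually) simp
qed

lemma cutoff_bounds: "0 \<le> cutoff k x \<and> cutoff k x \<le> 1"
  using iter_avg_tendsto_cutoff[of k x] iter_avg_bounds
  by (metis LIMSEQ_le_const LIMSEQ_le_const2)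

lemma cutoff_eq_0: "x \<le> c \<Longrightarrow> cutoff k x = 0"
  using iter_avg_tendsto_cutoff[of k x] by (simp add: iter_avg_eq_0 LIMSEQ_const_iff)

lemma cutoff_eq_1:
  assumes "x \<ge> c + b + (\<Sum>i. a (k + i))"
  shows "cutoff k x = 1"
proof -
  have "(\<Sum>i<d. a (k + i)) \<le> (\<Sum>i. a (k + i))" for d
    using summable_ignore_initial_segment[OF summable_a, of k] a_pos
    by (intro sum_le_suminf) (auto simp: add.commute less_imp_le)
  then have "iter_avg d k x = 1" for d
    using assms by (intro iter_avg_eq_1) (meson add_left_mono order_trans)
  then show ?thesis using iter_avg_tendsto_cutoff[of k x] by (simp add: LIMSEQ_const_iff)
qed

primrec cutoff_dq :: "nat \<Rightarrow> nat \<Rightarrow> real \<Rightarrow> real" where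
  "cutoff_dq 0 k = cutoff k"
| "cutoff_dq (Suc j) k = (\<lambda>x. (cutoff_dq j (Suc k) x - cutoff_dq j (Suc k) (x - a k)) / a k)"

lemma cutoff_dq_has_real_derivative: "(cutoff_dq j k has_real_derivative cutoff_dq (Suc j) k x) (at x)"
proof (induction j arbitrary: k x)
  case 0
  have "cutoff k = avg (a k) (cutoff (Suc k))" using cutoff_eq_avg by (simp add: fun_eq_iff)
  then show ?case by (simp add: avg_has_real_derivative continuous_on_cutoff a_pos)
next
  case (Suc j)
  have "(cutoff_dq j (Suc k) has_real_derivative cutoff_dq (Suc j) (Suc k) (x - a k)) (at (x - a k))"
    by (rule Suc)
  moreover have "((\<lambda>y. y - a k) has_real_derivative 1) (at x)"
    by (auto intro!: derivative_eq_intros)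
  ultimately have "((\<lambda>y. cutoff_dq j (Suc k) (y - a k)) has_real_derivative
      cutoff_dq (Suc j) (Suc k) (x - a k)) (at x)"
    using DERIV_chain2[of "cutoff_dq j (Suc k)" _ "\<lambda>y. y - a k" x 1] by simp
  with Suc[of "Suc k" x] show ?case by (auto intro!: DERIV_cdivide DERIV_diff)
qed

lemma abs_cutoff_dq_le: "\<bar>cutoff_dq j k x\<bar> \<le> (\<Prod>i<j. 2 / a (k + i))"
proof (induction j arbitrary: k x)
  case 0
  then show ?case using cutoff_bounds by simp
next
  case (Suc j)
  have "\<bar>cutoff_dq j (Suc k) x - cutoff_dq j (Suc k) (x - a k)\<bar> \<le> 2 * (\<Prod>i<j. 2 / a (Suc k + i))"
    using Suc[of "Suc k" x] Suc[of "Suc k" "x - a k"] by linarith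
  then have "\<bar>cutoff_dq (Suc j) k x\<bar> \<le> 2 / a k * (\<Prod>i<j. 2 / a (Suc k + i))"
    using a_pos[of k] by (simp add: abs_divide divide_right_mono)
  also have "\<dots> = (\<Prod>i<Suc j. 2 / a (k + i))"
    by (subst prod.lessThan_Suc_shift) simp
  finally show ?case .
qed

lemma higher_deriv_cutoff: "(deriv ^^ j) (cutoff 0) = cutoff_dq j 0"
proof (induction j)
  case (Suc j)
  show ?case
    using cutoff_dq_has_real_derivative[of j 0] by (simp add: Suc fun_eq_iff DERIV_imp_deriv)
qed simp

end

lemma smooth_cutoff_exists:
  fixes a :: "nat \<Rightarrow> real"
  assumes "\<And>i. a i > 0" and "summable a" and "b > 0"
  shows "\<exists>g. smooth_fun g \<and> (\<forall>x. 0 \<le> g x \<and> g x \<le> 1) \<and> (\<forall>x. x \<le> c \<longrightarrow> g x = 0)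
     \<and> (\<forall>x. x \<ge> c + b + suminf a \<longrightarrow> g x = 1)
     \<and> (\<forall>j x. \<bar>(deriv ^^ j) g x\<bar> \<le> (\<Prod>i<j. 2 / a i))"
proof -
  interpret cutoff_construction a b c by unfold_locales (use assms in auto)
  show ?thesis
  proof (intro exI[of _ "cutoff 0"] conjI allI impI)
    show "smooth_fun (cutoff 0)"
      unfolding smooth_fun_def higher_deriv_cutoff
      using cutoff_dq_has_real_derivative real_differentiable_def by blast
  qed (use cutoff_bounds cutoff_eq_0 cutoff_eq_1[where k=0] abs_cutoff_dq_le[of _ 0]
      higher_deriv_cutoff in auto)
qed

lemma phi_star_ge:
  assumes weight: "weight_function \<omega>" and t: "t \<ge> 0" and s: "s \<ge> 0"
  shows "s * t - \<omega> (exp s) \<le> phi_star \<omega> t"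
proof -
  have ln_little_o: "ln \<in> o[at_top](\<omega>)" and nn: "\<forall>t\<ge>0. \<omega> t \<ge> 0"
    using weight by (auto simp: weight_function_def)
  have "eventually (\<lambda>x. norm (ln x) \<le> (1/(t+1)) * norm (\<omega> x)) at_top"
    by (rule landau_o.smallD[OF ln_little_o]) (use t in simp)
  then obtain X where X: "\<And>x. x \<ge> X \<Longrightarrow> \<bar>ln x\<bar> \<le> (1/(t+1)) * \<bar>\<omega> x\<bar>"
    by (auto simp: eventually_at_top_linorder)
  have bd: "s' * t - \<omega> (exp s') \<le> \<bar>ln (max X 1)\<bar> * t" if s': "s' \<ge> 0" for s'
  proof (cases "exp s' \<ge> X")
    case True
    have w: "\<omega> (exp s') \<ge> 0" using nn by simp
    have "s' \<le> (1/(t+1)) * \<omega> (exp s')" using X[OF True] s' w by simp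
    then have "(t+1) * s' \<le> \<omega> (exp s')" using t by (simp add: field_simps)
    then have "s' * t - \<omega> (exp s') \<le> 0" using s' by (simp add: algebra_simps)
    then show ?thesis using t by (meson abs_ge_zero order_trans zero_le_mult_iff)
  next
    case False
    then have "exp s' < max X 1" by simp
    then have "s' < ln (max X 1)" by (metis exp_less_cancel_iff exp_ln max.strict_coboundedI2 zero_less_one)
    then have "s' \<le> \<bar>ln (max X 1)\<bar>" by simp
    then have "s' * t \<le> \<bar>ln (max X 1)\<bar> * t" using t by (simp add: mult_right_mono)
    moreover have "\<omega> (exp s') \<ge> 0" using nn by simp
    ultimately show ?thesis by simp
  qed
  have "bdd_above ((\<lambda>s. s * t - \<omega> (exp s)) ` {0..})"
    by (rule bdd_aboveI2[where M="\<bar>ln (max X 1)\<bar> * t"]) (use bd in auto)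
  then show ?thesis unfolding phi_star_def by (rule cSUP_upper2[where x=s]) (use s in auto)
qed

lemma weight_matrix_ge:
  assumes weight: "weight_function \<omega>" and m: "m > 0" and T: "T \<ge> 1"
  shows "exp (real j * ln T - \<omega> T / m) \<le> weight_matrix \<omega> m j"
proof -
  have "ln T * (m * real j) - \<omega> (exp (ln T)) \<le> phi_star \<omega> (m * real j)"
    by (rule phi_star_ge[OF weight]) (use m T in auto)
  then have "ln T * (m * real j) - \<omega> T \<le> phi_star \<omega> (m * real j)" using T by simp
  then have "(ln T * (m * real j) - \<omega> T) / m \<le> phi_star \<omega> (m * real j) / m"
    using m by (intro divide_right_mono) auto
  moreover have "(ln T * (m * real j) - \<omega> T) / m = real j * ln T - \<omega> T / m"
    using m by (simp add: field_simps)
  ultimately have "real j * ln T - \<omega> T / m \<le> phi_star \<omega> (m * real j) / m" by simp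
  then show ?thesis unfolding weight_matrix_def by simp
qed

lemma sigma_star_ge:
  assumes weight: "weight_function \<sigma>" and little_o: "\<sigma> \<in> o[at_top](\<lambda>t. t)"
    and u: "u > 0" and s: "s \<ge> 0"
  shows "\<sigma> s - s * u \<le> sigma_star \<sigma> u"
proof -
  have mo: "mono_on {0..} \<sigma>" and nn: "\<forall>t\<ge>0. \<sigma> t \<ge> 0"
    using weight by (auto simp: weight_function_def)
  have "eventually (\<lambda>x. norm (\<sigma> x) \<le> u * norm x) at_top"
    by (rule landau_o.smallD[OF little_o u])
  then obtain X where X: "\<And>x. x \<ge> X \<Longrightarrow> \<bar>\<sigma> x\<bar> \<le> u * \<bar>x\<bar>"
    by (auto simp: eventually_at_top_linorder)
  have bd: "\<sigma> s' - s' * u \<le> \<sigma> (max X 0)" if s': "s' \<ge> 0" for s'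
  proof (cases "s' \<ge> X")
    case True
    then have "\<sigma> s' \<le> u * s'" using X[OF True] s' by simp
    then show ?thesis using nn[rule_format, of "max X 0"] by (simp add: mult.commute)
  next
    case False
    then have "\<sigma> s' \<le> \<sigma> (max X 0)" using mo s' by (intro mono_onD[OF mo]) auto
    then show ?thesis using u s' by (smt (verit) mult_nonneg_nonneg)
  qed
  have "bdd_above ((\<lambda>s. \<sigma> s - s * u) ` {0..})"
    by (rule bdd_aboveI2[where M="\<sigma> (max X 0)"]) (use bd in auto)
  then show ?thesis unfolding sigma_star_def by (rule cSUP_upper2[where x=s]) (use s in auto)
qed

section \<open>Dyadic sums controlled by the heir condition\<close>

text \<open>
  By monotonicity of omega, this step function minorizes omega(t u)/u^2 on [1, \<infinity>) and its
  integral is a quarter of the partial dyadic sum.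
\<close>
definition dyadic_staircase :: "(real \<Rightarrow> real) \<Rightarrow> real \<Rightarrow> nat \<Rightarrow> real \<Rightarrow> ennreal" where
  "dyadic_staircase \<omega> t P u =
     (\<Sum>p<P. ennreal (\<omega> (t * 2^p) / (2^(p+1))\<^sup>2) * indicator {2^p..<2^(p+1)} u)"

lemma dyadic_staircase_le:
  assumes mono: "mono_on {0..} \<omega>" and nonneg: "\<And>t. t \<ge> 0 \<Longrightarrow> \<omega> t \<ge> 0" and t: "t > 0"
  shows "dyadic_staircase \<omega> t P u \<le> ennreal (\<omega> (t * u) / u\<^sup>2) * indicator {1..} u"
proof (induction P)
  case (Suc P)
  show ?case
  proof (cases "u \<in> {2^P..<2^(P+1)}")
    case True
    then have u: "2^P \<le> u" "u < 2^(P+1)" by auto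
    have "u \<ge> 1" using u(1) by (meson one_le_power order_trans one_le_numeral)
    have "u \<notin> {2^p..<2^(p+1)}" if "p < P" for p
    proof -
      have "(2::real)^(p+1) \<le> 2^P" using that by (intro power_increasing) auto
      then show ?thesis using u by auto
    qed
    then have "dyadic_staircase \<omega> t P u = 0" by (simp add: dyadic_staircase_def)
    moreover have "\<omega> (t * 2^P) / (2^(P+1))\<^sup>2 \<le> \<omega> (t * u) / u\<^sup>2"
    proof (rule frac_le)
      show "\<omega> (t * 2^P) \<le> \<omega> (t * u)" using t u by (intro mono_onD[OF mono]) auto
      show "u\<^sup>2 \<le> (2^(P+1))\<^sup>2" using u \<open>u \<ge> 1\<close> by (intro power_mono) auto
    qed (use nonneg t \<open>u \<ge> 1\<close> in auto)
    ultimately show ?thesis using True \<open>u \<ge> 1\<close> by (simp add: dyadic_staircase_def ennreal_leI)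
  next
    case False
    then show ?thesis using Suc by (simp add: dyadic_staircase_def)
  qed
qed (simp add: dyadic_staircase_def)

lemma nn_integral_dyadic_staircase:
  assumes nonneg: "\<And>t. t \<ge> 0 \<Longrightarrow> \<omega> t \<ge> 0" and t: "t > 0"
  shows "(\<integral>\<^sup>+ u. dyadic_staircase \<omega> t P u \<partial>lborel) = ennreal ((\<Sum>p<P. \<omega> (t * 2^p) / 2^p) / 4)"
proof -
  have "(\<integral>\<^sup>+ u. ennreal (\<omega> (t * 2^p) / (2^(p+1))\<^sup>2) * indicator {(2::real)^p..<2^(p+1)} u \<partial>lborel)
      = ennreal (\<omega> (t * 2^p) / (2^(p+1))\<^sup>2) * ennreal (2^p)" for p
    by (subst nn_integral_cmult_indicator) auto
  also have "ennreal (\<omega> (t * 2^p) / (2^(p+1))\<^sup>2) * ennreal (2^p)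
      = ennreal (\<omega> (t * 2^p) / (2^(p+1))\<^sup>2 * 2^p)" for p
    using nonneg t by (subst ennreal_mult) auto
  moreover have "\<omega> (t * 2^p) / (2^(p+1))\<^sup>2 * 2^p = \<omega> (t * 2^p) / 2^p / 4" for p
    by (simp add: power2_eq_square field_simps power_add)
  ultimately show ?thesis
    unfolding dyadic_staircase_def sum_divide_distrib
    using nonneg t by (subst nn_integral_sum) (auto simp: sum_ennreal)
qed

lemma dyadic_sum_le_integral:
  fixes \<omega> :: "real \<Rightarrow> real"
  assumes mono: "mono_on {0..} \<omega>" and nonneg: "\<And>t. t \<ge> 0 \<Longrightarrow> \<omega> t \<ge> 0" and t: "t > 0"
    and K: "K \<ge> 0"
    and integral: "(\<integral>\<^sup>+ u\<in>{1..}. ennreal (\<omega> (t * u) / u\<^sup>2) \<partial>lborel) \<le> ennreal K"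
  shows "summable (\<lambda>p. \<omega> (t * 2^p) / 2^p)" and "(\<Sum>p. \<omega> (t * 2^p) / 2^p) \<le> 4 * K"
proof -
  have "ennreal ((\<Sum>p<P. \<omega> (t * 2^p) / 2^p) / 4) \<le> ennreal K" for P
  proof -
    have "(\<integral>\<^sup>+ u. dyadic_staircase \<omega> t P u \<partial>lborel)
        \<le> (\<integral>\<^sup>+ u\<in>{1..}. ennreal (\<omega> (t * u) / u\<^sup>2) \<partial>lborel)"
      by (intro nn_integral_mono dyadic_staircase_le mono nonneg t)
    then show ?thesis using integral by (simp add: nn_integral_dyadic_staircase[OF nonneg t])
  qed
  then have partial: "(\<Sum>p<P. \<omega> (t * 2^p) / 2^p) \<le> 4 * K" for P
    using K by (simp add: ac_simps)
  have "0 \<le> \<omega> (t * 2^p) / 2^p" for p :: nat using nonneg t by simp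
  then show summable: "summable (\<lambda>p. \<omega> (t * 2^p) / 2^p)"
    using partial by (rule summableI_nonneg_bounded)
  show "(\<Sum>p. \<omega> (t * 2^p) / 2^p) \<le> 4 * K" using suminf_le_const[OF summable partial] .
qed

section \<open>A doubling sequence adapted to omega\<close>

locale doubling_sequence =
  fixes \<omega> :: "real \<Rightarrow> real" and S m :: real
  assumes weight: "weight_function \<omega>"
    and S_ge_1: "S \<ge> 1" and m_pos: "m > 0" and summable_dyadic: "summable (\<lambda>p. \<omega> (S * 2^p) / 2^p)"
begin

lemma weight_nonneg: "t \<ge> 0 \<Longrightarrow> \<omega> t \<ge> 0"
  using weight by (simp add: weight_function_def)

primrec level :: "nat \<Rightarrow> nat" where
  "level 0 = 0"
| "level (Suc j) = (if \<omega> (S * 2^(Suc (level j))) - \<omega> (S * 2^(level j)) \<le> m * real (Suc j) * ln 2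
                 then Suc (level j) else level j)"

definition tau :: "nat \<Rightarrow> real" where "tau j = S * 2^(level j)"

lemma tau_ge: "tau j \<ge> S"
  unfolding tau_def using S_ge_1 by simp

lemma tau_pos: "tau j > 0" using tau_ge[of j] S_ge_1 by simp

lemma sum_ln_tau_le: "(\<Sum>i<j. ln (tau i)) \<le> \<omega> S / m + real j * ln (tau j) - \<omega> (tau j) / m"
proof (induction j)
  case 0 then show ?case by (simp add: tau_def)
next
  case (Suc j)
  have key: "\<omega> (tau (Suc j)) - \<omega> (tau j) \<le> m * real (Suc j) * (ln (tau (Suc j)) - ln (tau j))"
  proof (cases "\<omega> (S * 2^(Suc (level j))) - \<omega> (S * 2^(level j)) \<le> m * real (Suc j) * ln 2")
    case True
    have e: "level (Suc j) = Suc (level j)" using True by simp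
    have t2: "tau (Suc j) = 2 * tau j" using e by (simp add: tau_def)
    have l: "ln (tau (Suc j)) - ln (tau j) = ln 2"
      unfolding t2 using tau_pos[of j] by (simp add: ln_mult)
    show ?thesis unfolding l using True by (simp add: tau_def e)
  next
    case False
    then show ?thesis by (simp add: tau_def)
  qed
  have "(\<Sum>i<Suc j. ln (tau i)) = (\<Sum>i<j. ln (tau i)) + ln (tau j)" by simp
  also have "\<dots> \<le> \<omega> S / m + real (Suc j) * ln (tau j) - \<omega> (tau j) / m"
    using Suc by (simp add: algebra_simps)
  also have "\<dots> \<le> \<omega> S / m + real (Suc j) * ln (tau (Suc j)) - \<omega> (tau (Suc j)) / m"
  proof -
    have "(\<omega> (tau (Suc j)) - \<omega> (tau j)) / m \<le> real (Suc j) * (ln (tau (Suc j)) - ln (tau j))"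
      using key m_pos by (simp add: divide_le_eq mult.commute mult.left_commute)
    then show ?thesis by (simp add: algebra_simps diff_divide_distrib)
  qed
  finally show ?case .
qed

definition stall_bound :: "real \<Rightarrow> real" where "stall_bound t = \<omega> (2 * t) / (m * ln 2)"

definition stall_weight :: "nat \<Rightarrow> real" where "stall_weight q = stall_bound (S * 2^q) / (S * 2^q)"

lemma stall_weight_eq: "stall_weight q = (2 / (m * ln 2 * S)) * (\<omega> (S * 2^(Suc q)) / 2^(Suc q))"
  unfolding stall_weight_def stall_bound_def using S_ge_1 m_pos by (simp add: field_simps)

lemma stall_bound_nonneg: "t \<ge> 0 \<Longrightarrow> stall_bound t \<ge> 0"
  unfolding stall_bound_def using weight_nonneg m_pos by simp

lemma summable_stall_weight: "summable stall_weight"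
proof -
  have "summable (\<lambda>q. \<omega> (S * 2^(Suc q)) / 2^(Suc q))"
    using summable_ignore_initial_segment[OF summable_dyadic, of 1] by simp
  then show ?thesis unfolding stall_weight_eq by (rule summable_mult)
qed

lemma stall_weight_nonneg: "stall_weight q \<ge> 0"
  unfolding stall_weight_def using stall_bound_nonneg[of "S * 2^q"] S_ge_1 by simp

definition stall_tail :: "nat \<Rightarrow> real" where "stall_tail k = (\<Sum>q. stall_weight (q + Suc k))"

lemma stall_tail_Suc: "stall_tail k = stall_weight (Suc k) + stall_tail (Suc k)"
proof -
  have s: "summable (\<lambda>q. stall_weight (q + Suc k))"
    using summable_ignore_initial_segment[OF summable_stall_weight, of "Suc k"] .
  have "(\<Sum>q. stall_weight (Suc q + Suc k)) = (\<Sum>q. stall_weight (q + Suc k)) - stall_weight (0 + Suc k)"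
    by (rule suminf_split_head[OF s])
  then show ?thesis unfolding stall_tail_def by simp
qed

lemma stall_tail_nonneg: "stall_tail k \<ge> 0"
  unfolding stall_tail_def
  by (intro suminf_nonneg summable_ignore_initial_segment summable_stall_weight stall_weight_nonneg)

text \<open>
  In a doubling step the first summand drops by 1/tau_j, and the stall budget of the new level
  is paid from the stall tail; in a stalled step stall_bound (tau j) > j + 1, so the second
  summand drops by exactly 1/tau_j.
\<close>
definition potential :: "nat \<Rightarrow> real" where
  "potential j = 2 / tau j + max 0 (stall_bound (tau j) - real j) / tau j + stall_tail (level j)"

lemma potential_nonneg: "potential j \<ge> 0"
  unfolding potential_def using tau_pos[of j] stall_tail_nonneg[of "level j"] by simp

lemma inv_tau_le_potential_diff: "1 / tau j \<le> potential j - potential (Suc j)"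
proof (cases "\<omega> (S * 2^(Suc (level j))) - \<omega> (S * 2^(level j)) \<le> m * real (Suc j) * ln 2")
  case True
  let ?t = "tau j"
  have e: "level (Suc j) = Suc (level j)" using True by simp
  have t2: "tau (Suc j) = 2 * ?t" unfolding tau_def e by simp
  have st: "S * 2^(Suc (level j)) = 2 * ?t" by (simp add: tau_def)
  have g: "stall_tail (level j) = stall_bound (2 * ?t) / (2 * ?t) + stall_tail (Suc (level j))"
    using stall_tail_Suc[of "level j"] unfolding stall_weight_def st .
  have tp: "?t > 0" by (rule tau_pos)
  have a2: "stall_bound (2 * ?t) \<ge> 0" using stall_bound_nonneg tp by simp
  have "max 0 (stall_bound (2 * ?t) - real (Suc j)) \<le> stall_bound (2 * ?t)" using a2 by simp
  then have m1: "max 0 (stall_bound (2 * ?t) - real (Suc j)) / (2 * ?t) \<le> stall_bound (2 * ?t) / (2 * ?t)"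
    using tp by (intro divide_right_mono) auto
  have m0: "0 \<le> max 0 (stall_bound ?t - real j) / ?t" using tp by simp
  have "potential j - potential (Suc j) = 2 / ?t - 2 / (2 * ?t) + max 0 (stall_bound ?t - real j) / ?t
      - max 0 (stall_bound (2 * ?t) - real (Suc j)) / (2 * ?t) + stall_bound (2 * ?t) / (2 * ?t)"
    unfolding potential_def e t2 g by simp
  moreover have "2 / ?t - 2 / (2 * ?t) = 1 / ?t" using tp by (simp add: field_simps)
  ultimately show ?thesis using m1 m0 by linarith
next
  case False
  let ?t = "tau j"
  have e: "level (Suc j) = level j" using False by simp
  have t2: "tau (Suc j) = ?t" unfolding tau_def e by simp
  have tp: "?t > 0" by (rule tau_pos)
  have "m * real (Suc j) * ln 2 < \<omega> (2 * ?t) - \<omega> ?t"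
    using False by (simp add: tau_def mult.assoc mult.left_commute)
  moreover have "\<omega> ?t \<ge> 0" using weight_nonneg tp by simp
  ultimately have "m * ln 2 * real (Suc j) < \<omega> (2 * ?t)" by (simp add: mult_ac)
  then have "real (Suc j) < stall_bound ?t" unfolding stall_bound_def using m_pos by (simp add: field_simps)
  then have "max 0 (stall_bound ?t - real j) - max 0 (stall_bound ?t - real (Suc j)) = 1" by simp
  then have "max 0 (stall_bound ?t - real j) / ?t - max 0 (stall_bound ?t - real (Suc j)) / ?t = 1 / ?t"
    by (simp add: diff_divide_distrib[symmetric])
  then show ?thesis unfolding potential_def e t2 by simp
qed

lemma sum_inv_tau_le_potential: "(\<Sum>j<J. 1 / tau j) \<le> potential 0"
proof -
  have "(\<Sum>j<J. 1 / tau j) \<le> potential 0 - potential J"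
  proof (induction J)
    case 0 then show ?case by simp
  next
    case (Suc J) then show ?case using inv_tau_le_potential_diff[of J] by simp
  qed
  then show ?thesis using potential_nonneg[of J] by simp
qed

lemma suminf_stall_weight_le: "suminf stall_weight \<le> 4 / (m * S) * (\<Sum>p. \<omega> (S * 2^p) / 2^p)"
proof -
  define Q where "Q = (\<Sum>p. \<omega> (S * 2^p) / 2^p)"
  have shifted: "(\<Sum>q. \<omega> (S * 2^Suc q) / 2^Suc q) = Q - \<omega> S"
    using suminf_split_head[OF summable_dyadic] by (simp add: Q_def)
  have "\<omega> S \<le> Q"
    using sum_le_suminf[OF summable_dyadic, of "{..<1}"] weight_nonneg S_ge_1 by (simp add: Q_def)
  have "suminf stall_weight = 2 / (m * ln 2 * S) * (Q - \<omega> S)"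
    unfolding stall_weight_eq shifted[symmetric]
    using summable_ignore_initial_segment[OF summable_dyadic, of 1] by (intro suminf_mult) simp
  also have "\<dots> \<le> 4 / (m * S) * Q"
  proof (rule mult_mono)
    show "2 / (m * ln 2 * S) \<le> 4 / (m * S)"
      using ln2_ge_two_thirds m_pos S_ge_1 by (simp add: field_simps)
  qed (use \<open>\<omega> S \<le> Q\<close> weight_nonneg S_ge_1 m_pos in auto)
  finally show ?thesis by (simp add: Q_def)
qed

lemma potential_0_le: "potential 0 \<le> (2 + 4 * (\<Sum>p. \<omega> (S * 2^p) / 2^p) / m) / S"
proof -
  have "potential 0 = 2 / S + suminf stall_weight"
    using suminf_split_head[OF summable_stall_weight] stall_bound_nonneg[of S] S_ge_1
    by (simp add: potential_def tau_def stall_tail_def stall_weight_def)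
  also have "\<dots> \<le> (2 + 4 * (\<Sum>p. \<omega> (S * 2^p) / 2^p) / m) / S"
    using suminf_stall_weight_le m_pos S_ge_1 by (simp add: field_simps)
  finally show ?thesis .
qed

lemma summable_inv_tau: "summable (\<lambda>j. 1 / tau j)"
  by (rule summableI_nonneg_bounded[OF _ sum_inv_tau_le_potential]) (use tau_pos in \<open>simp add: less_imp_le\<close>)

lemma suminf_inv_tau_le: "(\<Sum>j. 1 / tau j) \<le> (2 + 4 * (\<Sum>p. \<omega> (S * 2^p) / 2^p) / m) / S"
  using suminf_le_const[OF summable_inv_tau sum_inv_tau_le_potential] potential_0_le by linarith

lemma prod_tau_le:
  "(\<Prod>i<j. tau i) \<le> exp ((\<Sum>p. \<omega> (S * 2^p) / 2^p) / m) * weight_matrix \<omega> m j"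
proof -
  have "\<omega> S \<le> (\<Sum>p. \<omega> (S * 2^p) / 2^p)"
    using sum_le_suminf[OF summable_dyadic, of "{..<1}"] weight_nonneg S_ge_1 by simp
  then have "exp (\<omega> S / m) \<le> exp ((\<Sum>p. \<omega> (S * 2^p) / 2^p) / m)"
    using m_pos by (simp add: divide_right_mono)
  moreover have "(\<Prod>i<j. tau i) \<le> exp (\<omega> S / m) * exp (real j * ln (tau j) - \<omega> (tau j) / m)"
  proof -
    have "(\<Prod>i<j. tau i) = exp (\<Sum>i<j. ln (tau i))" by (simp add: exp_sum tau_pos)
    also have "\<dots> \<le> exp (\<omega> S / m + (real j * ln (tau j) - \<omega> (tau j) / m))"
      using sum_ln_tau_le[of j] by simp
    finally show ?thesis by (simp add: exp_add)
  qed
  moreover have "exp (real j * ln (tau j) - \<omega> (tau j) / m) \<le> weight_matrix \<omega> m j"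
    using tau_ge[of j] S_ge_1 by (intro weight_matrix_ge weight m_pos) simp
  ultimately show ?thesis
    by (meson exp_gt_zero less_imp_le mult_mono order_trans)
qed

end

lemma weight_matrix_cutoff_exists:
  assumes "weight_function \<omega>" and "S \<ge> 1" and "m > 0"
    and "summable (\<lambda>p. \<omega> (S * 2^p) / 2^p)" and b: "b > 0"
  defines "Q \<equiv> \<Sum>p. \<omega> (S * 2^p) / 2^p"
  shows "\<exists>g. smooth_fun g \<and> (\<forall>x. 0 \<le> g x \<and> g x \<le> 1) \<and> (\<forall>x. x \<le> c \<longrightarrow> g x = 0)
     \<and> (\<forall>x. x \<ge> c + b + (4 + 8 * Q / m) / S \<longrightarrow> g x = 1)
     \<and> (\<forall>j x. \<bar>(deriv ^^ j) g x\<bar> \<le> exp (Q / m) * weight_matrix \<omega> m j)"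
proof -
  interpret doubling_sequence \<omega> S m by unfold_locales fact+
  define a where "a = (\<lambda>i. 2 / tau i)"
  have a_pos: "a i > 0" for i using tau_pos by (simp add: a_def)
  have "summable a" unfolding a_def using summable_mult[OF summable_inv_tau, of 2] by simp
  moreover have "suminf a \<le> (4 + 8 * Q / m) / S"
  proof -
    have "suminf a = 2 * (\<Sum>j. 1 / tau j)"
      unfolding a_def using suminf_mult[OF summable_inv_tau, of 2] by simp
    moreover have "(4 + 8 * Q / m) / S = 2 * ((2 + 4 * Q / m) / S)" by (simp add: field_simps)
    ultimately show ?thesis using suminf_inv_tau_le unfolding Q_def by linarith
  qed
  moreover have "(\<Prod>i<j. 2 / a i) \<le> exp (Q / m) * weight_matrix \<omega> m j" for j
    using prod_tau_le[of j] by (simp add: a_def Q_def)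
  ultimately show ?thesis
    using smooth_cutoff_exists[OF a_pos _ b, where c=c]
    by (meson add_left_mono order_trans)
qed

section \<open>Choice of the scale\<close>

lemma sigma_eq_linear_scale_exists:
  assumes weight: "weight_function \<sigma>" and little_o: "\<sigma> \<in> o[at_top](\<lambda>t. t)"
    and l: "l > 0" and K: "K > 0"
  shows "\<exists>r0>0. \<forall>r. 0 < r \<and> r < r0 \<longrightarrow> (\<exists>S\<ge>1. \<sigma> S = l * r * S \<and> K \<le> \<sigma> S)"
proof -
  have cont: "continuous_on {0..} \<sigma>" and mono: "mono_on {0..} \<sigma>"
    and lim: "filterlim \<sigma> at_top at_top"
    using weight by (auto simp: weight_function_def)
  obtain X0 where "\<And>x. x \<ge> X0 \<Longrightarrow> K \<le> \<sigma> x"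
    using lim by (auto simp: filterlim_at_top eventually_at_top_linorder)
  then obtain S0 where S0: "S0 \<ge> 1" "K \<le> \<sigma> S0" by (meson max.cobounded1 max.cobounded2)
  define r0 where "r0 = \<sigma> S0 / (l * S0)"
  have "r0 > 0" using S0 K l by (simp add: r0_def)
  moreover have "\<exists>S\<ge>1. \<sigma> S = l * r * S \<and> K \<le> \<sigma> S" if r: "0 < r" "r < r0" for r
  proof -
    have "eventually (\<lambda>x. norm (\<sigma> x) \<le> (l * r) * norm x) at_top"
      using l r by (intro landau_o.smallD[OF little_o]) simp
    then obtain X1 where "\<And>x. x \<ge> X1 \<Longrightarrow> \<bar>\<sigma> x\<bar> \<le> l * r * \<bar>x\<bar>"
      by (auto simp: eventually_at_top_linorder)
    then obtain S1 where S1: "S1 \<ge> S0" "\<sigma> S1 \<le> l * r * S1"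
      using S0 by (metis abs_ge_self abs_of_nonneg max.cobounded1 max.cobounded2 order_trans zero_le_one)
    have "l * r * S0 \<le> \<sigma> S0"
      using r S0 l by (simp add: r0_def pos_less_divide_eq mult_ac less_imp_le)
    then obtain S where S: "S0 \<le> S" "S \<le> S1" "l * r * S - \<sigma> S = 0"
      using IVT'[of "\<lambda>x. l * r * x - \<sigma> x" S0 0 S1] S1 S0
      by (force intro!: continuous_intros continuous_on_subset[OF cont])
    then show ?thesis
      using S0 mono_onD[OF mono, of S0 S] by (intro exI[of _ S]) auto
  qed
  ultimately show ?thesis by blast
qed

lemma heir_scale_bounds:
  fixes Q S C m r \<nu> y :: real
  assumes \<nu>: "\<nu> \<ge> 1" and C: "C > 0" and m: "m \<ge> 128 * C * \<nu>" and S: "S \<ge> 1"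
    and y: "y = 3 * \<nu> * r * S" and y_large: "48 * \<nu> + 3 \<le> y" and Q: "Q \<le> 4 * (C * y + C)"
  shows "(4 + 8 * Q / m) / S \<le> r" and "Q / m \<le> 1 + (y - S * (\<nu> * r)) / \<nu>"
proof -
  have m_pos: "m > 0" using m C \<nu> by (smt (verit) mult_pos_pos)
  have "Q / m \<le> 4 * C * (y + 1) / (128 * C * \<nu>)"
    using Q m m_pos C \<nu> y_large by (intro frac_le) (auto simp: algebra_simps)
  also have "\<dots> = (y + 1) / (32 * \<nu>)"
    using C \<nu> by (simp add: field_simps)
  finally have Q_m: "Q / m \<le> (y + 1) / (32 * \<nu>)" .
  have "4 + (y + 1) / (4 * \<nu>) \<le> y / (3 * \<nu>)"
    using mult_left_mono[OF y_large, of \<nu>] \<nu> by (simp add: field_simps)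
  moreover have "8 * Q / m \<le> (y + 1) / (4 * \<nu>)"
    using Q_m m_pos \<nu> by (simp add: field_simps)
  moreover have "y / (3 * \<nu>) = r * S" using y \<nu> by simp
  ultimately have "4 + 8 * Q / m \<le> r * S" by linarith
  then show "(4 + 8 * Q / m) / S \<le> r" using S by (simp add: divide_le_eq mult.commute)
  have "(y + 1) / (32 * \<nu>) \<le> 1 + (y - S * (\<nu> * r)) / \<nu>"
    using y y_large \<nu> by (simp add: field_simps)
  with Q_m show "Q / m \<le> 1 + (y - S * (\<nu> * r)) / \<nu>" by linarith
qed

lemma heir_cutoff_at_scale:
  fixes \<omega> \<sigma> :: "real \<Rightarrow> real"
  assumes \<omega>: "weight_function \<omega>" and \<sigma>: "weight_function \<sigma>" and \<sigma>_little_o: "\<sigma> \<in> o[at_top](\<lambda>t. t)"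
    and C: "C > 0"
    and integral: "\<And>t. t > 0 \<Longrightarrow>
      (\<integral>\<^sup>+ u\<in>{1..}. ennreal (\<omega> (t * u) / u\<^sup>2) \<partial>lborel) \<le> ennreal (C * \<sigma> t + C)"
    and \<nu>: "\<nu> \<ge> 1" and m: "m \<ge> 128 * C * \<nu>" and r: "r > 0"
    and scale: "\<exists>S\<ge>1. \<sigma> S = 3 * \<nu> * r * S \<and> 48 * \<nu> + 3 \<le> \<sigma> S"
  shows "\<exists>g. smooth_fun g \<and> (\<forall>x. 0 \<le> g x \<and> g x \<le> 1) \<and>
           (\<forall>x. x \<le> -r \<longrightarrow> g x = 0) \<and> (\<forall>x. x \<ge> r \<longrightarrow> g x = 1) \<and>
           (\<forall>x j. \<bar>(deriv ^^ j) g x\<bar> / weight_matrix \<omega> m j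
                   \<le> exp 1 * exp (sigma_star \<sigma> (\<nu> * r) / \<nu>))"
proof -
  obtain S where S: "S \<ge> 1" and \<sigma>S: "\<sigma> S = 3 * \<nu> * r * S" and \<sigma>S_large: "48 * \<nu> + 3 \<le> \<sigma> S"
    using scale by blast
  define Q where "Q = (\<Sum>p. \<omega> (S * 2^p) / 2^p)"
  have m_pos: "m > 0" using m C \<nu> by (smt (verit) mult_pos_pos)
  have "\<sigma> S \<ge> 0" using \<sigma> S by (simp add: weight_function_def)
  then have summable: "summable (\<lambda>p. \<omega> (S * 2^p) / 2^p)" and "Q \<le> 4 * (C * \<sigma> S + C)"
    using dyadic_sum_le_integral[of \<omega> S "C * \<sigma> S + C"] \<omega> S C integral[of S]
    by (auto simp: weight_function_def Q_def)
  then have length: "(4 + 8 * Q / m) / S \<le> r"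
    and Q_m: "Q / m \<le> 1 + (\<sigma> S - S * (\<nu> * r)) / \<nu>"
    using heir_scale_bounds[OF \<nu> C m S \<sigma>S \<sigma>S_large] by auto
  have "\<sigma> S - S * (\<nu> * r) \<le> sigma_star \<sigma> (\<nu> * r)"
    using \<nu> r S by (intro sigma_star_ge \<sigma> \<sigma>_little_o) auto
  then have "Q / m \<le> 1 + sigma_star \<sigma> (\<nu> * r) / \<nu>"
    using Q_m divide_right_mono[of _ _ \<nu>] \<nu> by fastforce
  then have exp_Q_m: "exp (Q / m) \<le> exp 1 * exp (sigma_star \<sigma> (\<nu> * r) / \<nu>)"
    by (simp add: exp_add[symmetric])
  obtain g where g: "smooth_fun g" "\<forall>x. 0 \<le> g x \<and> g x \<le> 1" "\<forall>x. x \<le> -r \<longrightarrow> g x = 0"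
      "\<forall>x. x \<ge> -r + r + (4 + 8 * Q / m) / S \<longrightarrow> g x = 1"
      "\<forall>j x. \<bar>(deriv ^^ j) g x\<bar> \<le> exp (Q / m) * weight_matrix \<omega> m j"
    using weight_matrix_cutoff_exists[OF \<omega> S m_pos summable r, of "-r"] unfolding Q_def by blast
  show ?thesis
  proof (intro exI[of _ g] conjI allI impI)
    fix x j
    have W_pos: "weight_matrix \<omega> m j > 0" by (simp add: weight_matrix_def)
    have "\<bar>(deriv ^^ j) g x\<bar> \<le> exp 1 * exp (sigma_star \<sigma> (\<nu> * r) / \<nu>) * weight_matrix \<omega> m j"
      using g(5) mult_right_mono[OF exp_Q_m, of "weight_matrix \<omega> m j"] W_pos
      by (meson less_imp_le order_trans)
    then show "\<bar>(deriv ^^ j) g x\<bar> / weight_matrix \<omega> m j \<le> exp 1 * exp (sigma_star \<sigma> (\<nu> * r) / \<nu>)"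
      using W_pos by (simp add: divide_le_eq)
  qed (use g length in auto)
qed

theorem lemma4p6:
  fixes \<omega> \<sigma> :: "real \<Rightarrow> real"
  assumes "weight_function \<omega>" and "non_quasianalytic \<omega>" and "concave_weight \<omega>"
    and "heir \<omega> \<sigma>"
  shows "\<forall>n::nat. n > 0 \<longrightarrow>
    (\<exists>m::nat. m > 0 \<and> (\<exists>M::real. M > 0 \<and> (\<exists>r0::real. 0 < r0 \<and> r0 < 1/2 \<and>
      (\<forall>r. 0 < r \<and> r < r0 \<longrightarrow>
        (\<exists>g :: real \<Rightarrow> real. smooth_fun g \<and>
           (\<forall>x. 0 \<le> g x \<and> g x \<le> 1) \<and>
           (\<forall>x. x \<le> -r \<longrightarrow> g x = 0) \<and>
           (\<forall>x. x \<ge> r \<longrightarrow> g x = 1) \<and>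
           (\<forall>x j. \<bar>(deriv ^^ j) g x\<bar> / weight_matrix \<omega> (real m) j
                   \<le> M * exp (sigma_star \<sigma> (real n * r) / real n)))))))"
proof (intro allI impI)
  fix n :: nat assume "n > 0"
  have \<sigma>: "weight_function \<sigma>" and \<sigma>_little_o: "\<sigma> \<in> o[at_top](\<lambda>t. t)"
    using \<open>heir \<omega> \<sigma>\<close> by (auto simp: heir_def)
  obtain C where "C > 0" and integral: "\<And>t. t > 0 \<Longrightarrow>
      (\<integral>\<^sup>+ u\<in>{1..}. ennreal (\<omega> (t * u) / u\<^sup>2) \<partial>lborel) \<le> ennreal (C * \<sigma> t + C)"
    using \<open>heir \<omega> \<sigma>\<close> by (auto simp: heir_def)
  define m :: nat where "m = nat \<lceil>128 * C * real n\<rceil> + 1"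
  have "m > 0" and m: "real m \<ge> 128 * C * real n" unfolding m_def by linarith+
  obtain r0 where "r0 > 0" and scale: "\<And>r. 0 < r \<Longrightarrow> r < r0 \<Longrightarrow>
      \<exists>S\<ge>1. \<sigma> S = 3 * real n * r * S \<and> 48 * real n + 3 \<le> \<sigma> S"
    using sigma_eq_linear_scale_exists[OF \<sigma> \<sigma>_little_o, of "3 * real n" "48 * real n + 3"] \<open>n > 0\<close>
    by auto
  show "\<exists>m>0. \<exists>M>0. \<exists>r0>0. r0 < 1/2 \<and> (\<forall>r. 0 < r \<and> r < r0 \<longrightarrow> (\<exists>g. smooth_fun g \<and>
           (\<forall>x. 0 \<le> g x \<and> g x \<le> 1) \<and> (\<forall>x. x \<le> -r \<longrightarrow> g x = 0) \<and> (\<forall>x. x \<ge> r \<longrightarrow> g x = 1) \<and>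
           (\<forall>x j. \<bar>(deriv ^^ j) g x\<bar> / weight_matrix \<omega> (real m) j
                   \<le> M * exp (sigma_star \<sigma> (real n * r) / real n))))"
    by (rule exI[of _ m], rule conjI[OF \<open>m > 0\<close>], rule exI[of _ "exp 1"], rule conjI[OF exp_gt_zero],
        rule exI[of _ "min r0 (1/4)"])
      (use \<open>r0 > 0\<close> \<open>n > 0\<close> scale m in
        \<open>auto intro!: heir_cutoff_at_scale[OF \<open>weight_function \<omega>\<close> \<sigma> \<sigma>_little_o \<open>C > 0\<close> integral]\<close>)
qed

end
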